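(* Let $0\le m<a<M\le1$, $k\ge0$ and $b,c>1$, and let $\omega(t)=-kt-(b-1)\ln t-(c-1)\ln(1-t)$ for $0<t<1$. (i) If $\omega'(a)>0$, then $$\int_a^M e^{-\omega(t)}\,dt\le\frac{e^{ka}a^{b-1}(1-a)^{c-1}}{\omega'(a)}$$ and $$\int_a^M e^{-\omega(t)}\,dt\ge\frac{e^{ka}a^{b-1}(1-a)^{c-1}}{\omega'(M)}\left(1-\exp\{-(M-a)\omega'(a)\}\right).$$ (ii) If $\omega'(a)<0$, then $$\int_m^a e^{-\omega(t)}\,dt\le\frac{e^{ka}a^{b-1}(1-a)^{c-1}}{-\omega'(a)}$$ and $$\int_m^a e^{-\omega(t)}\,dt\ge\frac{e^{ka}a^{b-1}(1-a)^{c-1}}{-\omega'(m)}\left(1-\exp\{(a-m)\omega'(a)\}\right).$$ *)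

theory Defs
  imports "HOL-Analysis.Analysis"
begin

definition omega :: "real \<Rightarrow> real \<Rightarrow> real \<Rightarrow> real \<Rightarrow> real" where
  "omega k b c t = - k * t - (b - 1) * ln t - (c - 1) * ln (1 - t)"

end

theory Submission
  imports Defs
begin

text \<open>
  For \<open>b, c \<ge> 1\<close> the derivative \<open>\<omega>'\<close> is increasing, so \<open>\<omega>\<close> is convex on \<open>(0,1)\<close>.
  Since \<open>\<omega>\<close> lies above its tangent at \<open>a\<close>, the integrand \<open>exp (-\<omega> t)\<close> is bounded by
  \<open>exp (-\<omega> a - \<omega>' a (t - a))\<close>, an exponential decaying away from \<open>a\<close> whose integral is at
  most \<open>exp (-\<omega> a) / |\<omega>' a|\<close>. Conversely, for \<open>t\<close> between \<open>a\<close> and an endpoint \<open>e\<close>, the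
  tangent at \<open>t\<close> and the monotonicity of \<open>\<omega>'\<close> give \<open>\<omega> t - \<omega> a \<le> \<omega>' e (t - a)\<close>, so the
  integrand dominates an exponential of rate \<open>|\<omega>' e| \<ge> |\<omega>' a|\<close>, which integrates exactly.
\<close>

definition omega' :: "real \<Rightarrow> real \<Rightarrow> real \<Rightarrow> real \<Rightarrow> real" where
  "omega' k b c t = - k - (b - 1) / t + (c - 1) / (1 - t)"

lemma omega_has_real_derivative:
  assumes "0 < x" "x < 1"
  shows "(omega k b c has_real_derivative omega' k b c x) (at x)"
proof -
  have "((\<lambda>t. - k * t - (b - 1) * ln t - (c - 1) * ln (1 - t)) has_real_derivative
          - k - (b - 1) * (1 / x) - (c - 1) * (- 1 / (1 - x))) (at x)"
    using assms by (auto intro!: derivative_eq_intros)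
  then show ?thesis
    unfolding omega_def[abs_def] omega'_def by (simp add: field_simps)
qed

lemma deriv_omega: "0 < x \<Longrightarrow> x < 1 \<Longrightarrow> deriv (omega k b c) x = omega' k b c x"
  using omega_has_real_derivative DERIV_imp_deriv by blast

lemma omega'_mono:
  assumes "0 < x" "x \<le> y" "y < 1" "b \<ge> 1" "c \<ge> 1"
  shows "omega' k b c x \<le> omega' k b c y"
proof -
  have "(b - 1) / y \<le> (b - 1) / x" using assms by (intro divide_left_mono) auto
  moreover have "(c - 1) / (1 - x) \<le> (c - 1) / (1 - y)" using assms by (intro divide_left_mono) auto
  ultimately show ?thesis unfolding omega'_def by linarith
qed

lemma convex_on_omega:
  assumes "b \<ge> 1" "c \<ge> 1"
  shows "convex_on {0<..<1} (omega k b c)"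
  using assms by (intro convex_on_realI[where f' = "omega' k b c"])
    (auto intro: omega_has_real_derivative omega'_mono)

lemma omega_above_tangent:
  assumes "0 < s" "s < 1" "0 < t" "t < 1" "b \<ge> 1" "c \<ge> 1"
  shows "omega' k b c s * (t - s) \<le> omega k b c t - omega k b c s"
  using assms
  by (intro convex_on_imp_above_tangent[OF convex_on_omega])
    (auto intro: has_field_derivative_at_within omega_has_real_derivative)

lemma omega_increment_le:
  assumes "t \<in> closed_segment a e" "0 < a" "a < 1" "0 < e" "e < 1" "b \<ge> 1" "c \<ge> 1"
  shows "omega k b c t - omega k b c a \<le> omega' k b c e * (t - a)"
proof -
  have t: "0 < t" "t < 1"
    using assms(1-5) by (auto simp: closed_segment_eq_real_ivl split: if_splits)
  have "omega k b c t - omega k b c a \<le> omega' k b c t * (t - a)"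
    using omega_above_tangent[of t a b c k] t assms by (simp add: algebra_simps)
  also have "\<dots> \<le> omega' k b c e * (t - a)"
  proof (cases "a \<le> e")
    case True
    then show ?thesis
      using t assms by (intro mult_right_mono omega'_mono) (auto simp: closed_segment_eq_real_ivl)
  next
    case False
    then show ?thesis
      using t assms by (intro mult_right_mono_neg omega'_mono) (auto simp: closed_segment_eq_real_ivl)
  qed
  finally show ?thesis .
qed

lemma exp_neg_omega_le_tangent:
  assumes "0 < a" "a < 1" "0 < t" "t < 1" "b \<ge> 1" "c \<ge> 1"
  shows "exp (- omega k b c t) \<le> exp (- omega k b c a) * exp (- omega' k b c a * (t - a))"
proof -
  have "omega' k b c a * (t - a) \<le> omega k b c t - omega k b c a"
    using assms by (rule omega_above_tangent)
  then show ?thesis by (simp add: mult_exp_exp)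
qed

lemma exp_neg_omega_ge_endpoint_slope:
  assumes "t \<in> closed_segment a e" "0 < a" "a < 1" "0 < e" "e < 1" "b \<ge> 1" "c \<ge> 1"
  shows "exp (- omega k b c a) * exp (- omega' k b c e * (t - a)) \<le> exp (- omega k b c t)"
proof -
  have "omega k b c t - omega k b c a \<le> omega' k b c e * (t - a)"
    using assms by (rule omega_increment_le)
  then show ?thesis by (simp add: mult_exp_exp)
qed

lemma continuous_on_exp_neg_omega:
  assumes "0 < lo" "hi < 1"
  shows "continuous_on {lo..hi} (\<lambda>t. exp (- omega k b c t))"
proof -
  have "continuous_on {lo..hi} (omega k b c)"
    using assms by (auto intro!: continuous_at_imp_continuous_on DERIV_isCont omega_has_real_derivative)
  then show ?thesis by (intro continuous_intros)
qed

lemma exp_neg_omega_eq: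
  assumes "0 < a" "a < 1"
  shows "exp (- omega k b c a) = exp (k * a) * a powr (b - 1) * (1 - a) powr (c - 1)"
  using assms unfolding omega_def powr_def by (simp add: exp_add[symmetric] algebra_simps)

lemma has_integral_exp_affine:
  fixes r x\<^sub>0 lo hi :: real
  assumes "r \<noteq> 0" "lo \<le> hi"
  shows "((\<lambda>t. exp (r * (t - x\<^sub>0))) has_integral
           (exp (r * (hi - x\<^sub>0)) - exp (r * (lo - x\<^sub>0))) / r) {lo..hi}"
proof -
  have "((\<lambda>t. exp (r * (t - x\<^sub>0)) / r) has_real_derivative exp (r * (t - x\<^sub>0))) (at t within {lo..hi})"
    for t using assms by (auto intro!: derivative_eq_intros)
  then show ?thesis
    using fundamental_theorem_of_calculus[OF assms(2), of "\<lambda>t. exp (r * (t - x\<^sub>0)) / r"]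
    by (simp add: has_real_derivative_iff_has_vector_derivative diff_divide_distrib)
qed

text \<open>No integrability of \<open>f\<close> is assumed: a non-integrable function has integral \<open>0 \<le> I\<close>.\<close>
lemma integral_le_off_negligible:
  fixes f g :: "'a::euclidean_space \<Rightarrow> real"
  assumes "(g has_integral I) T" "0 \<le> I" "negligible S" "\<And>t. t \<in> T - S \<Longrightarrow> f t \<le> g t"
  shows "integral T f \<le> I"
proof -
  define f' where "f' = (\<lambda>t. if t \<in> S then g t else f t)"
  have "integral T f = integral T f'"
    using assms(3) by (rule integral_spike) (auto simp: f'_def)
  moreover have "integral T f' \<le> I" if "f' integrable_on T"
    using integral_le[OF that, of g] assms by (auto simp: f'_def integral_unique)
  ultimately show ?thesis
    using assms(2) by (cases "f' integrable_on T") (auto simp: not_integrable_integral)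
qed

lemma integral_exp_neg_omega_right_le:
  assumes "0 < a" "a \<le> M" "M \<le> 1" "b \<ge> 1" "c \<ge> 1" "omega' k b c a > 0"
  shows "integral {a..M} (\<lambda>t. exp (- omega k b c t)) \<le> exp (- omega k b c a) / omega' k b c a"
proof -
  define C D where "C = exp (- omega k b c a)" and "D = omega' k b c a"
  have D: "D > 0" using assms(6) by (simp add: D_def)
  have "((\<lambda>t. exp (- D * (t - a))) has_integral (1 - exp (- D * (M - a))) / D) {a..M}"
    using has_integral_exp_affine[of "- D" a M a] assms D by (simp add: minus_divide_left)
  then have "((\<lambda>t. C * exp (- D * (t - a))) has_integral C * ((1 - exp (- D * (M - a))) / D)) {a..M}"
    by (rule has_integral_mult_right)
  then have "integral {a..M} (\<lambda>t. exp (- omega k b c t)) \<le> C * ((1 - exp (- D * (M - a))) / D)"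
  proof (rule integral_le_off_negligible[where S = "{1}"])
    \<comment> \<open>At \<open>t = 1\<close> the junk value \<open>ln 0 = 0\<close> breaks the tangent bound.\<close>
    show "0 \<le> C * ((1 - exp (- D * (M - a))) / D)"
      using D assms(2) by (simp add: C_def)
    show "exp (- omega k b c t) \<le> C * exp (- D * (t - a))" if "t \<in> {a..M} - {1}" for t
      unfolding C_def D_def using that assms by (intro exp_neg_omega_le_tangent) auto
  qed simp
  also have "\<dots> \<le> C / D"
    using D by (simp add: C_def divide_right_mono)
  finally show ?thesis by (simp add: C_def D_def)
qed
lemma integral_exp_neg_omega_left_le:
  assumes "0 \<le> m" "m \<le> a" "a < 1" "b \<ge> 1" "c \<ge> 1" "omega' k b c a < 0"
  shows "integral {m..a} (\<lambda>t. exp (- omega k b c t)) \<le> exp (- omega k b c a) / - omega' k b c a"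
proof -
  define C D where "C = exp (- omega k b c a)" and "D = omega' k b c a"
  have D: "D < 0" using assms(6) by (simp add: D_def)
  have "((\<lambda>t. exp (- D * (t - a))) has_integral (1 - exp (- D * (m - a))) / - D) {m..a}"
    using has_integral_exp_affine[of "- D" m a a] assms D by simp
  then have "((\<lambda>t. C * exp (- D * (t - a))) has_integral C * ((1 - exp (- D * (m - a))) / - D)) {m..a}"
    by (rule has_integral_mult_right)
  then have "integral {m..a} (\<lambda>t. exp (- omega k b c t)) \<le> C * ((1 - exp (- D * (m - a))) / - D)"
  proof (rule integral_le_off_negligible[where S = "{0}"])
    have "- D * (m - a) \<le> 0"
      using D assms(2) by (intro mult_nonneg_nonpos) auto
    then have "0 \<le> C * (1 - exp (- D * (m - a)))"
      by (simp add: C_def)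
    then show "0 \<le> C * ((1 - exp (- D * (m - a))) / - D)"
      using D by (simp add: divide_nonneg_neg)
    show "exp (- omega k b c t) \<le> C * exp (- D * (t - a))" if "t \<in> {m..a} - {0}" for t
      unfolding C_def D_def using that assms by (intro exp_neg_omega_le_tangent) auto
  qed simp
  also have "\<dots> \<le> C / - D"
  proof -
    have "C * (1 - exp (- D * (m - a))) \<le> C" by (simp add: C_def)
    then show ?thesis using D by (simp add: divide_right_mono_neg)
  qed
  finally show ?thesis by (simp add: C_def D_def)
qed

lemma integral_exp_neg_omega_right_ge:
  assumes "0 < a" "a \<le> M" "M < 1" "b \<ge> 1" "c \<ge> 1" "omega' k b c a > 0"
  shows "exp (- omega k b c a) / omega' k b c M * (1 - exp (- (M - a) * omega' k b c a))
           \<le> integral {a..M} (\<lambda>t. exp (- omega k b c t))"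
proof -
  define C D W where "C = exp (- omega k b c a)" and "D = omega' k b c a" and "W = omega' k b c M"
  have DW: "0 < D" "D \<le> W" using assms by (auto simp: D_def W_def intro: omega'_mono)
  have "((\<lambda>t. exp (- W * (t - a))) has_integral (1 - exp (- W * (M - a))) / W) {a..M}"
    using has_integral_exp_affine[of "- W" a M a] assms DW by (simp add: minus_divide_left)
  then have int: "((\<lambda>t. C * exp (- W * (t - a))) has_integral C * ((1 - exp (- W * (M - a))) / W)) {a..M}"
    by (rule has_integral_mult_right)
  have "D * (M - a) \<le> W * (M - a)"
    using DW assms(2) by (intro mult_right_mono) auto
  then have "exp (- W * (M - a)) \<le> exp (- (M - a) * D)"
    by (simp add: algebra_simps)
  then have "C / W * (1 - exp (- (M - a) * D)) \<le> C * ((1 - exp (- W * (M - a))) / W)"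
    using DW by (simp add: C_def divide_right_mono)
  also have "\<dots> \<le> integral {a..M} (\<lambda>t. exp (- omega k b c t))"
  proof (rule has_integral_le[OF int integrable_integral])
    show "(\<lambda>t. exp (- omega k b c t)) integrable_on {a..M}"
      using assms by (intro integrable_continuous_interval continuous_on_exp_neg_omega) auto
    show "C * exp (- W * (t - a)) \<le> exp (- omega k b c t)" if "t \<in> {a..M}" for t
      unfolding C_def W_def using that assms
      by (intro exp_neg_omega_ge_endpoint_slope) (auto simp: closed_segment_eq_real_ivl)
  qed
  finally show ?thesis by (simp add: C_def D_def W_def)
qed

lemma integral_exp_neg_omega_left_ge:
  assumes "0 < m" "m \<le> a" "a < 1" "b \<ge> 1" "c \<ge> 1" "omega' k b c a < 0"
  shows "exp (- omega k b c a) / - omega' k b c m * (1 - exp ((a - m) * omega' k b c a))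
           \<le> integral {m..a} (\<lambda>t. exp (- omega k b c t))"
proof -
  define C D W where "C = exp (- omega k b c a)" and "D = omega' k b c a" and "W = omega' k b c m"
  have DW: "D < 0" "W \<le> D" using assms by (auto simp: D_def W_def intro: omega'_mono)
  have "((\<lambda>t. exp (- W * (t - a))) has_integral (1 - exp (- W * (m - a))) / - W) {m..a}"
    using has_integral_exp_affine[of "- W" m a a] assms DW by simp
  then have int: "((\<lambda>t. C * exp (- W * (t - a))) has_integral C * ((1 - exp (- W * (m - a))) / - W)) {m..a}"
    by (rule has_integral_mult_right)
  have "W * (a - m) \<le> D * (a - m)"
    using DW assms(2) by (intro mult_right_mono) auto
  then have "exp (- W * (m - a)) \<le> exp ((a - m) * D)"
    by (simp add: algebra_simps)
  then have "C * (1 - exp ((a - m) * D)) \<le> C * (1 - exp (- W * (m - a)))"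
    by (simp add: C_def)
  then have "C / - W * (1 - exp ((a - m) * D)) \<le> C * ((1 - exp (- W * (m - a))) / - W)"
    using DW by (simp add: divide_right_mono_neg)
  also have "\<dots> \<le> integral {m..a} (\<lambda>t. exp (- omega k b c t))"
  proof (rule has_integral_le[OF int integrable_integral])
    show "(\<lambda>t. exp (- omega k b c t)) integrable_on {m..a}"
      using assms by (intro integrable_continuous_interval continuous_on_exp_neg_omega) auto
    show "C * exp (- W * (t - a)) \<le> exp (- omega k b c t)" if "t \<in> {m..a}" for t
      unfolding C_def W_def using that assms
      by (intro exp_neg_omega_ge_endpoint_slope) (auto simp: closed_segment_eq_real_ivl)
  qed
  finally show ?thesis by (simp add: C_def D_def W_def)
qed

theorem lemma4:
  fixes m a M k b c :: real
  assumes "0 \<le> m" "m < a" "a < M" "M \<le> 1" "k \<ge> 0" "b > 1" "c > 1"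
  shows
   "(deriv (omega k b c) a > 0 \<longrightarrow>
      integral {a..M} (\<lambda>t. exp (- omega k b c t))
        \<le> exp (k * a) * a powr (b - 1) * (1 - a) powr (c - 1) / deriv (omega k b c) a
    \<and> integral {a..M} (\<lambda>t. exp (- omega k b c t))
        \<ge> (if M < 1 then exp (k * a) * a powr (b - 1) * (1 - a) powr (c - 1) / deriv (omega k b c) M
              * (1 - exp (- (M - a) * deriv (omega k b c) a))
           else 0))
  \<and> (deriv (omega k b c) a < 0 \<longrightarrow>
      integral {m..a} (\<lambda>t. exp (- omega k b c t))
        \<le> exp (k * a) * a powr (b - 1) * (1 - a) powr (c - 1) / (- deriv (omega k b c) a)
    \<and> integral {m..a} (\<lambda>t. exp (- omega k b c t))
        \<ge> (if 0 < m then exp (k * a) * a powr (b - 1) * (1 - a) powr (c - 1) / (- deriv (omega k b c) m)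
              * (1 - exp ((a - m) * deriv (omega k b c) a))
           else 0))"
proof -
  let ?f = "\<lambda>t. exp (- omega k b c t)"
  have a: "0 < a" "a < 1" and bc: "b \<ge> 1" "c \<ge> 1" using assms by auto
  have C: "exp (k * a) * a powr (b - 1) * (1 - a) powr (c - 1) = exp (- omega k b c a)"
    using exp_neg_omega_eq[OF a] by simp
  have nonneg: "0 \<le> integral S ?f" for S
    by (cases "?f integrable_on S") (auto intro: integral_nonneg simp: not_integrable_integral)
  show ?thesis
    unfolding C deriv_omega[OF a]
  proof (intro conjI impI)
    assume "omega' k b c a > 0"
    then show "integral {a..M} ?f \<le> exp (- omega k b c a) / omega' k b c a"
      and "integral {a..M} ?f \<ge> (if M < 1 then exp (- omega k b c a) / deriv (omega k b c) M
              * (1 - exp (- (M - a) * omega' k b c a)) else 0)"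
      using integral_exp_neg_omega_right_le[of a M] integral_exp_neg_omega_right_ge[of a M]
        deriv_omega[of M] assms bc nonneg by auto
  next
    assume "omega' k b c a < 0"
    then show "integral {m..a} ?f \<le> exp (- omega k b c a) / - omega' k b c a"
      and "integral {m..a} ?f \<ge> (if 0 < m then exp (- omega k b c a) / - deriv (omega k b c) m
              * (1 - exp ((a - m) * omega' k b c a)) else 0)"
      using integral_exp_neg_omega_left_le[of m a] integral_exp_neg_omega_left_ge[of m a]
        deriv_omega[of m] assms bc nonneg by auto
  qed
qed

end
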